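(* Assume the setting described in the context. Let $P$ and $P'$ be p-matrices with $P'\subset P$, with columns $I_1,\dots,I_{p+q+2}$ and $J_1,\dots,J_{p+q+2}$ respectively, such that for every column $i$ the column $J_i$ is nested in $I_i$ in the sense described in the context, and let $K_i,L_i$ be as defined there. For $j=1,\dots,p+q+2$ form the p-matrices $(J_1,\dots,J_{j-1},K_j,I_{j+1},\dots,I_{p+q+2})$ and $(J_1,\dots,J_{j-1},L_j,I_{j+1},\dots,I_{p+q+2})$. Then these $2(p+q+2)$ p-matrices (of which the empty ones may be discarded) are pairwise disjoint, and their union is $P\setminus P'$.
   Context: $\mathbb N=\{0,1,2,\dots\}$. For $a\in\mathbb Z$, $b\in\mathbb Z\cup\{\infty\}$, $[a,b]=\{j\in\mathbb N:a\le j\le b\}$ (with $j<\infty$ if $b=\infty$). A p-matrix with data $\mathbf a\in\mathbb Z^p$, $\mathbf b\in(\mathbb Z\cup\{\infty\})^p$, $\mathbf c\in\mathbb Z^q$, $\mathbf d\in(\mathbb Z\cup\{\infty\})^q$, integer-valued functions $E,F$ on the block $[\mathbf a,\mathbf b]=\prod[a_i,b_i]$ and $G,H$ on $[\mathbf c,\mathbf d]=\prod[c_j,d_j]$, is the set $\{(\mathbf k;\boldsymbol\ell;s)\in\mathbb N^{p+q+1}:\mathbf k\in[\mathbf a,\mathbf b],\boldsymbol\ell\in[\mathbf c,\mathbf d],s\in[E(\mathbf k),F(\mathbf k)]\cap[G(\boldsymbol\ell),H(\boldsymbol\ell)]\}$. Its columns are: $I_i=[a_i,b_i]$ for $i\le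 p$ (constraint on $k_i$), $I_{p+j}=[c_j,d_j]$ for $j\le q$ (constraint on $\ell_j$), $I_{p+q+1}$ = the interval-valued function $\mathbf k\mapsto[E(\mathbf k),F(\mathbf k)]$ and $I_{p+q+2}$ = the function $\boldsymbol\ell\mapsto[G(\boldsymbol\ell),H(\boldsymbol\ell)]$ (constraints on $s$). A p-matrix is written as the tuple of its columns, and conversely any such tuple (integer intervals in the first $p+q$ positions, interval-valued functions of $\mathbf k$ resp. $\boldsymbol\ell$ in the last two, each defined on the block given by the corresponding first columns) defines a p-matrix. Nesting: for an integer-interval column $I_i=[u,v]$, $J_i=[u',v']$, nesting means $u\le u'\le v'+1\le v+1$ (with $\infty+1=\infty$); then $K_i=[u,u'-1]$ and $L_i=[v'+1,v]$ (empty if $v'=v=\infty$). For the $s$-columns nesting means this pointwise: $E(\mathbf k)\le E'(\mathbf k)\le F'(\mathbf k)+1\le F(\mathbf k)+1$ for every $\mathbf k$ in the $\mathbf k$-block of $P'$ (and likewise for $G,H$ versus $G',H'$ on the $\boldsymbol\ell$-block of $P'$), and $K_{p+q+1}$ is $\mathbf k\mapsto[E(\mathbf k),E'(\mathbf k)-1]$, $L_{p+q+1}$ is $\mathbf k\mapsto[F'(\mathbf k)+1,F(\mathbf k)]$, similarly for column $p+q+2$. Under nesting, $I_i\setminus J_i=K_i\sqcup L_i$. *)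

theory Defs
  imports Main
begin

datatype ubound = Fin int | Infty

fun ub_suc :: "ubound \<Rightarrow> ubound" where
  "ub_suc (Fin v) = Fin (v + 1)"
| "ub_suc Infty = Infty"

fun ub_le :: "ubound \<Rightarrow> ubound \<Rightarrow> bool" where
  "ub_le _ Infty = True"
| "ub_le Infty (Fin _) = False"
| "ub_le (Fin x) (Fin y) = (x \<le> y)"

text \<open>An interval column [u,v] with u integer, v integer or infinity.\<close>
type_synonym intv = "int \<times> ubound"

definition intv_set :: "intv \<Rightarrow> nat set" where
  "intv_set I = {j::nat. fst I \<le> int j \<and> ub_le (Fin (int j)) (snd I)}"

definition nested :: "intv \<Rightarrow> intv \<Rightarrow> bool" where
  "nested J I \<longleftrightarrow> fst I \<le> fst J \<and> ub_le (Fin (fst J)) (ub_suc (snd J))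
                    \<and> ub_le (ub_suc (snd J)) (ub_suc (snd I))"

text \<open>K = [u, u'-1] and L = [v'+1, v] (empty if v' = v = infinity).\<close>
definition Kint :: "intv \<Rightarrow> intv \<Rightarrow> intv" where
  "Kint I J = (fst I, Fin (fst J - 1))"

definition Lint :: "intv \<Rightarrow> intv \<Rightarrow> intv" where
  "Lint I J = (case snd J of Fin w \<Rightarrow> (w + 1, snd I) | Infty \<Rightarrow> (0, Fin (-1)))"

text \<open>A p-matrix: interval columns for k (length p), for l (length q),
  and the interval-valued functions k \<mapsto> [E k, F k], l \<mapsto> [G l, H l].
  Points (k; l; s) of N^(p+q+1) are represented as (k, l, s) with k, l lists.\<close>
datatype pmat = PM "intv list" "intv list" "nat list \<Rightarrow> intv" "nat list \<Rightarrow> intv"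

fun kcols :: "pmat \<Rightarrow> intv list" where "kcols (PM A C EF GH) = A"
fun lcols :: "pmat \<Rightarrow> intv list" where "lcols (PM A C EF GH) = C"
fun scolk :: "pmat \<Rightarrow> nat list \<Rightarrow> intv" where "scolk (PM A C EF GH) = EF"
fun scoll :: "pmat \<Rightarrow> nat list \<Rightarrow> intv" where "scoll (PM A C EF GH) = GH"

definition block :: "intv list \<Rightarrow> nat list set" where
  "block A = {k. length k = length A \<and> (\<forall>i<length A. k ! i \<in> intv_set (A ! i))}"

definition pset :: "pmat \<Rightarrow> (nat list \<times> nat list \<times> nat) set" where
  "pset P = {(k, l, s). k \<in> block (kcols P) \<and> l \<in> block (lcols P)
              \<and> s \<in> intv_set (scolk P k) \<and> s \<in> intv_set (scoll P l)}"

text \<open>Columnwise nesting of P' in P (the s-columns pointwise on the blocks of P').\<close>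
definition pm_nested :: "pmat \<Rightarrow> pmat \<Rightarrow> bool" where
  "pm_nested P' P \<longleftrightarrow>
     length (kcols P') = length (kcols P) \<and> length (lcols P') = length (lcols P)
   \<and> (\<forall>i<length (kcols P). nested (kcols P' ! i) (kcols P ! i))
   \<and> (\<forall>i<length (lcols P). nested (lcols P' ! i) (lcols P ! i))
   \<and> (\<forall>k\<in>block (kcols P'). nested (scolk P' k) (scolk P k))
   \<and> (\<forall>l\<in>block (lcols P'). nested (scoll P' l) (scoll P l))"

text \<open>The p-matrix (J_1,...,J_{j-1}, X_j, I_{j+1},...,I_{p+q+2}) where X = K (side True)
  or X = L (side False); here j is 0-indexed, j < p+q+2.\<close>
definition piece :: "pmat \<Rightarrow> pmat \<Rightarrow> nat \<Rightarrow> bool \<Rightarrow> pmat" where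
  "piece P P' j side =
    (let X = (if side then Kint else Lint);
         p = length (kcols P); q = length (lcols P);
         A = kcols P; A' = kcols P'; C = lcols P; C' = lcols P';
         EF = scolk P; EF' = scolk P'; GH = scoll P; GH' = scoll P' in
     if j < p then PM (take j A' @ [X (A ! j) (A' ! j)] @ drop (Suc j) A) C EF GH
     else if j < p + q then
       PM A' (take (j - p) C' @ [X (C ! (j - p)) (C' ! (j - p))] @ drop (Suc (j - p)) C) EF GH
     else if j = p + q then PM A' C' (\<lambda>k. X (EF k) (EF' k)) GH
     else PM A' C' EF' (\<lambda>l. X (GH l) (GH' l)))"

end

theory Submission
  imports Defs
begin

text \<open>Read a point column by column. If it lies in \<open>P\<close> but not in \<open>P'\<close>, let \<open>j\<close> be the first
  column at which it leaves \<open>P'\<close>: it lies in \<open>J\<^sub>i\<close> for \<open>i < j\<close>, in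
  \<open>I\<^sub>j - J\<^sub>j = K\<^sub>j \<union> L\<^sub>j\<close> (a disjoint union), and in \<open>I\<^sub>i\<close> for \<open>i > j\<close>; so it lies in exactly one piece,
  and points of a piece are exactly of this form. Since the \<open>s\<close>-columns come last, a point
  reaching them in this way already lies in the blocks of \<open>P'\<close>, which is the only place where
  the \<open>s\<close>-columns are assumed to be nested.\<close>

lemma intv_set_mono_nested:
  assumes "nested J I" shows "intv_set J \<subseteq> intv_set I"
  using assms by (cases I; cases J; cases "snd I"; cases "snd J")
    (auto simp: nested_def intv_set_def)

lemma intv_set_diff_nested:
  assumes "nested J I"
  shows "intv_set I - intv_set J = intv_set (Kint I J) \<union> intv_set (Lint I J)"
  using assms by (cases I; cases J; cases "snd I"; cases "snd J")
    (auto simp: nested_def intv_set_def Kint_def Lint_def)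

lemma intv_set_Kint_Lint_disjoint:
  assumes "nested J I" shows "intv_set (Kint I J) \<inter> intv_set (Lint I J) = {}"
  using assms by (cases I; cases J; cases "snd I"; cases "snd J")
    (auto simp: nested_def intv_set_def Kint_def Lint_def)

definition staircase :: "nat \<Rightarrow> (nat \<Rightarrow> bool) \<Rightarrow> (nat \<Rightarrow> bool) \<Rightarrow> (nat \<Rightarrow> bool) \<Rightarrow> nat \<Rightarrow> bool" where
  "staircase N inI inJ inX j \<longleftrightarrow> (\<forall>i<N. if i < j then inJ i else if i = j then inX i else inI i)"

text \<open>\<open>staircase N inI inJ inX j\<close> is membership in the piece \<open>(J\<^sub>1,\<dots>,J\<^bsub>j-1\<^esub>,X\<^sub>j,I\<^bsub>j+1\<^esub>,\<dots>)\<close> for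
  a fixed point. The conditions on column \<open>i\<close> are only required when the point lies in
  \<open>J\<close> on all earlier columns, since later columns may depend on the earlier coordinates.\<close>

context
  fixes N :: nat and inI inJ :: "nat \<Rightarrow> bool" and inX :: "bool \<Rightarrow> nat \<Rightarrow> bool"
  assumes J_imp_I: "\<And>i. i < N \<Longrightarrow> \<forall>i'<i. inJ i' \<Longrightarrow> inJ i \<Longrightarrow> inI i"
    and I_diff_J_iff_X: "\<And>i. i < N \<Longrightarrow> \<forall>i'<i. inJ i' \<Longrightarrow> inI i \<and> \<not> inJ i \<longleftrightarrow> inX True i \<or> inX False i"
    and X_disjoint: "\<And>i. i < N \<Longrightarrow> \<forall>i'<i. inJ i' \<Longrightarrow> \<not> (inX True i \<and> inX False i)"
begin

lemma staircase_prefix: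
  assumes "staircase N inI inJ (inX b) j" "j < N"
  shows "\<forall>i<j. inJ i" and "inI j \<and> \<not> inJ j" and "inX b j"
proof -
  show prefix: "\<forall>i<j. inJ i" and step: "inX b j"
    using assms by (auto simp: staircase_def)
  show "inI j \<and> \<not> inJ j"
    using I_diff_J_iff_X[OF \<open>j < N\<close> prefix] step by (cases b) simp_all
qed

lemma staircase_unique:
  assumes "staircase N inI inJ (inX b) j" "staircase N inI inJ (inX b') j'" "j < N" "j' < N"
  shows "j = j' \<and> b = b'"
proof -
  note stair = staircase_prefix[OF assms(1,3)] staircase_prefix[OF assms(2,4)]
  have "j = j'"
    using stair by (meson linorder_neqE_nat)
  moreover have "b = b'"
    using X_disjoint[OF \<open>j < N\<close>] stair \<open>j = j'\<close> by (cases b; cases b') simp_all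
  ultimately show ?thesis ..
qed

lemma ex_staircase_iff:
  "(\<exists>j<N. \<exists>b. staircase N inI inJ (inX b) j) \<longleftrightarrow> (\<forall>i<N. inI i) \<and> \<not> (\<forall>i<N. inJ i)"
proof
  assume "\<exists>j<N. \<exists>b. staircase N inI inJ (inX b) j"
  then obtain j b where j: "j < N" and stair: "staircase N inI inJ (inX b) j" by blast
  note prefix = staircase_prefix[OF stair j]
  have "inI i" if "i < N" for i
  proof (cases i j rule: linorder_cases)
    case less
    then show ?thesis using J_imp_I[OF \<open>i < N\<close>] prefix(1) by simp
  next
    case equal
    then show ?thesis using prefix(2) by simp
  next
    case greater
    then show ?thesis using stair \<open>i < N\<close> by (auto simp: staircase_def)
  qed
  with prefix(2) j show "(\<forall>i<N. inI i) \<and> \<not> (\<forall>i<N. inJ i)" by blast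
next
  assume outside: "(\<forall>i<N. inI i) \<and> \<not> (\<forall>i<N. inJ i)"
  define j where "j = (LEAST i. i < N \<and> \<not> inJ i)"
  have j: "j < N" "\<not> inJ j"
    using LeastI_ex[of "\<lambda>i. i < N \<and> \<not> inJ i"] outside unfolding j_def by blast+
  have prefix: "\<forall>i<j. inJ i"
    using not_less_Least[of _ "\<lambda>i. i < N \<and> \<not> inJ i"] j(1) unfolding j_def by (meson less_trans)
  obtain b where "inX b j"
    using I_diff_J_iff_X[OF j(1) prefix] outside j by blast
  then have "staircase N inI inJ (inX b) j"
    using prefix outside by (auto simp: staircase_def)
  with j show "\<exists>j<N. \<exists>b. staircase N inI inJ (inX b) j" by blast
qed

end

lemma all_less_columns_split:
  "(\<forall>i<p + q + 2. R (i::nat)) \<longleftrightarrow> (\<forall>i<p. R i) \<and> (\<forall>i<q. R (p + i)) \<and> R (p + q) \<and> R (p + q + 1)"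
proof -
  have "i < p + q + 2 \<longleftrightarrow> i < p \<or> (\<exists>i'<q. i = p + i') \<or> i = p + q \<or> i = p + q + 1" for i
    by (cases "i < p") (auto intro: exI[of _ "i - p"])
  then show ?thesis by auto
qed

fun coord :: "pmat \<Rightarrow> nat \<Rightarrow> nat list \<times> nat list \<times> nat \<Rightarrow> nat" where
  "coord (PM A C EF GH) i (k, l, s) =
     (if i < length A then k ! i else if i < length A + length C then l ! (i - length A) else s)"

fun column :: "pmat \<Rightarrow> nat \<Rightarrow> nat list \<times> nat list \<times> nat \<Rightarrow> intv" where
  "column (PM A C EF GH) i (k, l, s) =
     (if i < length A then A ! i else if i < length A + length C then C ! (i - length A)
      else if i = length A + length C then EF k else GH l)"

definition ncols :: "pmat \<Rightarrow> nat" where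
  "ncols P = length (kcols P) + length (lcols P) + 2"

definition on_column :: "pmat \<Rightarrow> nat \<Rightarrow> nat list \<times> nat list \<times> nat \<Rightarrow> bool" where
  "on_column P i x \<longleftrightarrow> coord P i x \<in> intv_set (column P i x)"

lemma pset_iff_on_columns:
  "(k, l, s) \<in> pset P \<longleftrightarrow> length k = length (kcols P) \<and> length l = length (lcols P)
     \<and> (\<forall>i<ncols P. on_column P i (k, l, s))"
proof (cases P)
  case (PM A C EF GH)
  show ?thesis
    unfolding PM ncols_def kcols.simps lcols.simps all_less_columns_split
    by (auto simp: pset_def block_def on_column_def)
qed

lemma coord_eq_if_same_lengths:
  assumes "length (kcols Q) = length (kcols P)" "length (lcols Q) = length (lcols P)"
  shows "coord Q = coord P"
  using assms by (cases P; cases Q) (auto intro!: ext)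

context
  fixes P P' :: pmat
  assumes same_lengths: "length (kcols P') = length (kcols P)" "length (lcols P') = length (lcols P)"
begin

lemma piece_lengths:
  assumes "j < ncols P"
  shows "length (kcols (piece P P' j b)) = length (kcols P)"
    and "length (lcols (piece P P' j b)) = length (lcols P)"
  using assms same_lengths by (auto simp: piece_def Let_def ncols_def)

lemma column_piece:
  assumes "j < ncols P" "i < ncols P"
  shows "column (piece P P' j b) i x =
    (if i < j then column P' i x
     else if i = j then (if b then Kint else Lint) (column P i x) (column P' i x)
     else column P i x)"
proof -
  obtain A C EF GH where P: "P = PM A C EF GH" by (cases P)
  obtain A' C' EF' GH' where P': "P' = PM A' C' EF' GH'" by (cases P')
  obtain k l s where x: "x = (k, l, s)" by (cases x)
  have lens: "length A' = length A" "length C' = length C"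
    using same_lengths unfolding P P' by simp_all
  consider "j < length A" | "length A \<le> j" "j < length A + length C"
    | "j = length A + length C" | "j = length A + length C + 1"
    using assms(1) unfolding P ncols_def by fastforce
  then show ?thesis
    using lens assms(2) unfolding P P' x ncols_def
    by cases (auto simp: piece_def Let_def nth_append min_def Suc_diff_Suc)
qed

end

definition on_cut_column :: "pmat \<Rightarrow> pmat \<Rightarrow> bool \<Rightarrow> nat \<Rightarrow> nat list \<times> nat list \<times> nat \<Rightarrow> bool" where
  "on_cut_column P P' b i x \<longleftrightarrow>
     coord P i x \<in> intv_set ((if b then Kint else Lint) (column P i x) (column P' i x))"

context
  fixes P P' :: pmat
  assumes nested: "pm_nested P' P"
begin

lemma pm_nested_lengths:
  "length (kcols P') = length (kcols P)" "length (lcols P') = length (lcols P)"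
  using nested by (simp_all add: pm_nested_def)

lemma nested_column_on_prefix:
  assumes "length k = length (kcols P)" "length l = length (lcols P)" "i < ncols P"
    and prefix: "\<forall>i'<i. on_column P' i' (k, l, s)"
  shows "nested (column P' i (k, l, s)) (column P i (k, l, s))"
proof -
  obtain A C EF GH where P: "P = PM A C EF GH" by (cases P)
  obtain A' C' EF' GH' where P': "P' = PM A' C' EF' GH'" by (cases P')
  have lens: "length A' = length A" "length C' = length C"
    using pm_nested_lengths unfolding P P' by simp_all
  consider "i < length A" | "length A \<le> i" "i < length A + length C"
    | "i = length A + length C" | "i = length A + length C + 1"
    using assms(3) unfolding P ncols_def by fastforce
  then show ?thesis
  proof cases
    case 1
    then show ?thesis using nested by (simp add: P P' pm_nested_def)
  next
    case 2
    then show ?thesis using nested by (simp add: P P' pm_nested_def)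
  next
    case 3
    have "k ! i' \<in> intv_set (A' ! i')" if "i' < length A" for i'
      using prefix[rule_format, of i'] that lens 3 by (simp add: P' on_column_def)
    then have "k \<in> block A'"
      using assms(1) lens by (simp add: P block_def)
    then show ?thesis using nested 3 by (simp add: P P' pm_nested_def)
  next
    case 4
    have "l ! i' \<in> intv_set (C' ! i')" if "i' < length C" for i'
      using prefix[rule_format, of "length A + i'"] that lens 4 by (simp add: P' on_column_def)
    then have "l \<in> block C'"
      using assms(2) lens by (simp add: P block_def)
    then show ?thesis using nested 4 by (simp add: P P' pm_nested_def)
  qed
qed

lemma on_column_staircase_conditions:
  assumes "length k = length (kcols P)" "length l = length (lcols P)"
  shows "\<And>i. i < ncols P \<Longrightarrow> \<forall>i'<i. on_column P' i' (k, l, s) \<Longrightarrow>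
           on_column P' i (k, l, s) \<Longrightarrow> on_column P i (k, l, s)"
    and "\<And>i. i < ncols P \<Longrightarrow> \<forall>i'<i. on_column P' i' (k, l, s) \<Longrightarrow>
           on_column P i (k, l, s) \<and> \<not> on_column P' i (k, l, s) \<longleftrightarrow>
           on_cut_column P P' True i (k, l, s) \<or> on_cut_column P P' False i (k, l, s)"
    and "\<And>i. i < ncols P \<Longrightarrow> \<forall>i'<i. on_column P' i' (k, l, s) \<Longrightarrow>
           \<not> (on_cut_column P P' True i (k, l, s) \<and> on_cut_column P P' False i (k, l, s))"
proof -
  have coord': "coord P' = coord P"
    by (rule coord_eq_if_same_lengths[OF pm_nested_lengths])
  fix i assume "i < ncols P" "\<forall>i'<i. on_column P' i' (k, l, s)"
  note nested_i = nested_column_on_prefix[OF assms this]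
  show "on_column P' i (k, l, s) \<Longrightarrow> on_column P i (k, l, s)"
    using intv_set_mono_nested[OF nested_i] by (auto simp: on_column_def coord')
  show "on_column P i (k, l, s) \<and> \<not> on_column P' i (k, l, s) \<longleftrightarrow>
      on_cut_column P P' True i (k, l, s) \<or> on_cut_column P P' False i (k, l, s)"
    using intv_set_diff_nested[OF nested_i] by (auto simp: on_column_def on_cut_column_def coord')
  show "\<not> (on_cut_column P P' True i (k, l, s) \<and> on_cut_column P P' False i (k, l, s))"
    using intv_set_Kint_Lint_disjoint[OF nested_i] by (auto simp: on_cut_column_def)
qed

lemma pset_piece_iff_staircase:
  assumes "j < ncols P"
  shows "(k, l, s) \<in> pset (piece P P' j b) \<longleftrightarrow>
    length k = length (kcols P) \<and> length l = length (lcols P) \<and>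
    staircase (ncols P) (\<lambda>i. on_column P i (k, l, s)) (\<lambda>i. on_column P' i (k, l, s))
      (\<lambda>i. on_cut_column P P' b i (k, l, s)) j"
proof -
  note lens = piece_lengths[OF pm_nested_lengths assms]
  have coord_piece: "coord (piece P P' j b) = coord P"
    by (rule coord_eq_if_same_lengths[OF lens])
  have coord': "coord P' = coord P"
    by (rule coord_eq_if_same_lengths[OF pm_nested_lengths])
  have "on_column (piece P P' j b) i x \<longleftrightarrow>
      (if i < j then on_column P' i x else if i = j then on_cut_column P P' b i x else on_column P i x)"
    if "i < ncols P" for i x
    using column_piece[OF pm_nested_lengths assms that]
    by (simp add: on_column_def on_cut_column_def coord_piece coord')
  then show ?thesis
    by (simp add: pset_iff_on_columns lens ncols_def staircase_def)
qed

lemma pset_pieces_disjoint: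
  assumes "j < ncols P" "j' < ncols P" "(j, b) \<noteq> (j', b')"
  shows "pset (piece P P' j b) \<inter> pset (piece P P' j' b') = {}"
proof (rule equals0I)
  fix x assume x: "x \<in> pset (piece P P' j b) \<inter> pset (piece P P' j' b')"
  obtain k l s where x_eq: "x = (k, l, s)" by (cases x)
  from x have lens: "length k = length (kcols P)" "length l = length (lcols P)"
    and "staircase (ncols P) (\<lambda>i. on_column P i (k, l, s)) (\<lambda>i. on_column P' i (k, l, s))
      (\<lambda>i. on_cut_column P P' b i (k, l, s)) j"
    and "staircase (ncols P) (\<lambda>i. on_column P i (k, l, s)) (\<lambda>i. on_column P' i (k, l, s))
      (\<lambda>i. on_cut_column P P' b' i (k, l, s)) j'"
    by (simp_all add: x_eq pset_piece_iff_staircase assms(1,2))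
  then have "j = j' \<and> b = b'"
    using staircase_unique[where inX = "\<lambda>b i. on_cut_column P P' b i (k, l, s)",
        OF on_column_staircase_conditions[OF lens]] assms(1,2) by blast
  with assms(3) show False by simp
qed

lemma UN_pset_pieces:
  "(\<Union>j<ncols P. \<Union>b. pset (piece P P' j b)) = pset P - pset P'"
proof (rule set_eqI)
  fix x :: "nat list \<times> nat list \<times> nat"
  obtain k l s where x: "x = (k, l, s)" by (cases x)
  show "x \<in> (\<Union>j<ncols P. \<Union>b. pset (piece P P' j b)) \<longleftrightarrow> x \<in> pset P - pset P'"
  proof (cases "length k = length (kcols P) \<and> length l = length (lcols P)")
    case True
    then have lens: "length k = length (kcols P)" "length l = length (lcols P)" by simp_all
    from True have "x \<in> (\<Union>j<ncols P. \<Union>b. pset (piece P P' j b)) \<longleftrightarrow>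
        (\<exists>j<ncols P. \<exists>b. staircase (ncols P) (\<lambda>i. on_column P i x) (\<lambda>i. on_column P' i x)
           (\<lambda>i. on_cut_column P P' b i x) j)"
      by (auto simp: x pset_piece_iff_staircase)
    also have "\<dots> \<longleftrightarrow> (\<forall>i<ncols P. on_column P i x) \<and> \<not> (\<forall>i<ncols P. on_column P' i x)"
      unfolding x
      by (rule ex_staircase_iff[where inX = "\<lambda>b i. on_cut_column P P' b i (k, l, s)",
            OF on_column_staircase_conditions[OF lens]])
    also have "\<dots> \<longleftrightarrow> x \<in> pset P - pset P'"
      using True by (simp add: x pset_iff_on_columns pm_nested_lengths ncols_def)
    finally show ?thesis .
  next
    case False
    then show ?thesis by (auto simp: x pset_piece_iff_staircase pset_iff_on_columns[of _ _ _ P])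
  qed
qed

end

theorem theorem14p2:
  fixes P P' :: pmat
  assumes "pset P' \<subseteq> pset P"
    and "pm_nested P' P"
  defines "N \<equiv> length (kcols P) + length (lcols P) + 2"
  shows "(\<forall>j\<in>{..<N}. \<forall>j'\<in>{..<N}. \<forall>s s'. (j, s) \<noteq> (j', s') \<longrightarrow>
            pset (piece P P' j s) \<inter> pset (piece P P' j' s') = {})
         \<and> (\<Union>j\<in>{..<N}. \<Union>s\<in>UNIV. pset (piece P P' j s)) = pset P - pset P'"
proof -
  have "N = ncols P" by (simp add: N_def ncols_def)
  then show ?thesis
    using pset_pieces_disjoint[OF assms(2)] UN_pset_pieces[OF assms(2)] by blast
qed

end
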